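(* Let $\mathbf{X}=\{X^n\}_{n=1}^\infty$ (null hypothesis) and $\overline{\mathbf{X}}=\{\overline{X}^n\}_{n=1}^\infty$ (alternative hypothesis) be general sources with common alphabet $\mathcal{X}$, and let $\eta$ and $B_e(r\mid\mathbf{X}\|\overline{\mathbf{X}})$ be as defined in the context. Then for every $r\ge 0$, $$B_e(r\mid\mathbf{X}\|\overline{\mathbf{X}})=\inf_{R\in\mathbb{R}}\{R+\eta(R)\mid \eta(R)<r\},$$ where the infimum of the empty set is $+\infty$; in particular $B_e(0\mid\mathbf{X}\|\overline{\mathbf{X}})=+\infty$.
   Context: A general source $\mathbf{X}=\{X^n\}_{n=1}^\infty$ is a sequence of random variables $X^n$ taking values in $\mathcal{X}^n$, where $\mathcal{X}$ is an arbitrary abstract (measurable) set; no consistency between different $n$ is assumed. $P_Z$ denotes the distribution of a random variable $Z$. For $\mathbf{x}\in\mathcal{X}^n$, $\frac{P_{X^n}(\mathbf{x})}{P_{\overline{X}^n}(\mathbf{x})}$ denotes $g_n(\mathbf{x})$, the Radon–Nikodym derivative of $P_{X^n}$ with respect to $P_{\overline{X}^n}$, with the convention that $g_n=+\infty$ on a $P_{\overline{X}^n}$-null set carrying the singular part of $P_{X^n}$; $\frac{P_{X^n}(X^n)}{P_{\overline{X}^n}(X^n)}:=g_n(X^n)$. Logarithms are natural; $R+(+\infty)=+\infty$. Define $$\eta(R)=\liminf_{n\to\infty}\frac1n\log\frac{1}{\Pr\left\{\frac1n\log\frac{P_{X^n}(X^n)}{P_{\overline{X}^n}(X^n)}\le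 R\right\}}\in[0,+\infty].$$ For a measurable acceptance region $\mathcal{A}_n\subset\mathcal{X}^n$, let $\mu_n=\Pr\{X^n\notin\mathcal{A}_n\}$ (first kind error probability) and $\lambda_n=\Pr\{\overline{X}^n\in\mathcal{A}_n\}$ (second kind error probability). For $r\ge0$, a real $E$ is $r$-achievable if there exist acceptance regions $\mathcal{A}_n$ ($n=1,2,\dots$) with $\liminf_{n}\frac1n\log\frac1{\mu_n}\ge r$ and $\liminf_{n}\frac1n\log\frac1{\lambda_n}\ge E$. $B_e(r\mid\mathbf{X}\|\overline{\mathbf{X}})=\sup\{E\mid E\text{ is } r\text{-achievable}\}$. *)

theory Defs
  imports "HOL-Probability.Probability"
begin

text \<open>Generalized Radon-Nikodym derivative g of P with respect to Q:
  g is Q-measurable with values in [0,+inf]; there is a Q-null set N carrying the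
  singular part of P, on which g = +inf, and off N, g is the density of P w.r.t. Q.\<close>
definition gen_RN_deriv :: "'b measure \<Rightarrow> 'b measure \<Rightarrow> ('b \<Rightarrow> ennreal) \<Rightarrow> bool" where
  "gen_RN_deriv P Q g \<longleftrightarrow>
     g \<in> borel_measurable Q \<and>
     (\<exists>N\<in>sets Q. emeasure Q N = 0 \<and> (\<forall>x\<in>N. g x = \<infinity>) \<and>
        (\<forall>A\<in>sets Q. emeasure P A =
            (\<integral>\<^sup>+x. g x * indicator (A - N) x \<partial>Q) + emeasure P (A \<inter> N)))"

definition ln_enn :: "ennreal \<Rightarrow> ereal" where
  "ln_enn y = (if y = 0 then -\<infinity> else if y = \<infinity> then \<infinity> else ereal (ln (enn2real y)))"

definition neglog :: "real \<Rightarrow> ereal" where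
  "neglog p = (if p = 0 then \<infinity> else ereal (- ln p))"

definition exponent :: "(nat \<Rightarrow> real) \<Rightarrow> ereal" where
  "exponent p = liminf (\<lambda>n. ereal (1 / real n) * neglog (p n))"

text \<open>eta(R); P n = distribution of X^n, Q n = distribution of Xbar^n, g n = dP_n/dQ_n.\<close>
definition eta :: "(nat \<Rightarrow> 'b measure) \<Rightarrow> (nat \<Rightarrow> 'b \<Rightarrow> ennreal) \<Rightarrow> real \<Rightarrow> ereal" where
  "eta P g R = exponent (\<lambda>n. measure (P n)
      {x \<in> space (P n). ereal (1 / real n) * ln_enn (g n x) \<le> ereal R})"

definition r_achievable :: "(nat \<Rightarrow> 'b measure) \<Rightarrow> (nat \<Rightarrow> 'b measure) \<Rightarrow> real \<Rightarrow> real \<Rightarrow> bool" where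
  "r_achievable P Q r E \<longleftrightarrow>
     (\<exists>Acc::nat \<Rightarrow> 'b set. (\<forall>n. Acc n \<in> sets (Q n)) \<and>
        exponent (\<lambda>n. measure (P n) (space (P n) - Acc n)) \<ge> ereal r \<and>
        exponent (\<lambda>n. measure (Q n) (Acc n)) \<ge> ereal E)"

definition B_e :: "(nat \<Rightarrow> 'b measure) \<Rightarrow> (nat \<Rightarrow> 'b measure) \<Rightarrow> real \<Rightarrow> ereal" where
  "B_e P Q r = Sup {ereal E | E. r_achievable P Q r E}"

end

theory Submission
  imports Defs
begin

text \<open>
  Write S n R (the set llr_sublevel n R) for the event (1/n) log g n \<le> R. On S n R the
  measure P n is at most e^(nR) Q n, and off S n R the measure Q n is at most e^(-nR) P n.
  Converse: for any acceptance region, P n (S n R) \<le> e^(nR) \<lambda> n + \<mu> n. When \<eta>(R) < r the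
  term \<mu> n decays too fast to matter, so the exponent E of \<lambda> satisfies E - R \<le> \<eta>(R).
  Achievability: for E below the infimum, accept the complement of S n (E - r), so that
  \<mu> n = P n (S n (E - r)) has exponent \<eta>(E - r) \<ge> r. Cutting the acceptance region into the
  layers between S n (R k) and S n (R (k+1)) on a finite grid R k = E - r + k\<delta> bounds \<lambda> n by
  the terms e^(-n R k) P n (S n (R (k+1))) and e^(-n R K), each of exponent at least E.
\<close>

lemma ereal_le_scaled_neglog_iff:
  assumes "0 < n" "0 \<le> p"
  shows "ereal b \<le> ereal (1 / real n) * neglog p \<longleftrightarrow> p \<le> exp (- real n * b)"
proof (cases "p = 0")
  case False
  then have "0 < p" using assms(2) by simp
  have "ereal b \<le> ereal (1 / real n) * neglog p \<longleftrightarrow> real n * b \<le> - ln p"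
    using False assms(1) by (simp add: neglog_def field_simps)
  also have "\<dots> \<longleftrightarrow> p \<le> exp (- real n * b)"
    using ln_le_cancel_iff[OF \<open>0 < p\<close> exp_gt_zero, of "- real n * b"] by (simp add: le_minus_iff)
  finally show ?thesis .
qed (use assms(1) in \<open>simp add: neglog_def\<close>)

lemma exponent_ge_iff:
  assumes "\<And>n. 0 \<le> p n"
  shows "a \<le> exponent p \<longleftrightarrow>
    (\<forall>b. ereal b < a \<longrightarrow> (\<forall>\<^sub>F n in sequentially. p n \<le> exp (- real n * b)))"
proof (intro iffI allI impI)
  fix b assume "a \<le> exponent p" "ereal b < a"
  then have "\<forall>\<^sub>F n in sequentially. ereal b < ereal (1 / real n) * neglog (p n)"
    unfolding exponent_def le_Liminf_iff by auto
  with eventually_gt_at_top[of 0] show "\<forall>\<^sub>F n in sequentially. p n \<le> exp (- real n * b)"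
    by eventually_elim (use ereal_le_scaled_neglog_iff assms in \<open>auto dest: less_imp_le\<close>)
next
  assume decay: "\<forall>b. ereal b < a \<longrightarrow> (\<forall>\<^sub>F n in sequentially. p n \<le> exp (- real n * b))"
  show "a \<le> exponent p"
    unfolding exponent_def le_Liminf_iff
  proof (intro allI impI)
    fix y assume "y < a"
    then obtain b where b: "y < ereal b" "ereal b < a" using ereal_dense2 by blast
    from decay b(2) have "\<forall>\<^sub>F n in sequentially. p n \<le> exp (- real n * b)" by blast
    with eventually_gt_at_top[of 0]
    show "\<forall>\<^sub>F n in sequentially. y < ereal (1 / real n) * neglog (p n)"
      by eventually_elim (use b(1) ereal_le_scaled_neglog_iff assms in \<open>blast intro: less_le_trans\<close>)
  qed
qed

lemma neglog_antimono: "0 \<le> p \<Longrightarrow> p \<le> q \<Longrightarrow> neglog q \<le> neglog p"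
  by (auto simp: neglog_def)

lemma exponent_mono:
  assumes "\<forall>\<^sub>F n in sequentially. p n \<le> q n" "\<And>n. 0 \<le> p n"
  shows "exponent q \<le> exponent p"
  unfolding exponent_def
  by (intro Liminf_mono eventually_mono[OF assms(1)] ereal_mult_left_mono neglog_antimono assms(2)) simp_all

lemma exponent_nonneg:
  assumes "\<And>n. 0 \<le> p n" "\<And>n. p n \<le> 1"
  shows "0 \<le> exponent p"
  unfolding exponent_ge_iff[OF assms(1)]
  by (auto intro!: always_eventually order_trans[OF assms(2)] simp: mult_nonneg_nonpos)

lemma exponent_mult_exp_ge:
  assumes "\<And>n. 0 \<le> p n" "a \<le> exponent p"
  shows "ereal R + a \<le> exponent (\<lambda>n. exp (- real n * R) * p n)"
  unfolding exponent_ge_iff[OF mult_nonneg_nonneg[OF exp_ge_zero assms(1)]]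
proof (intro allI impI)
  fix b assume "ereal b < ereal R + a"
  then have "ereal (b - R) < a" by (cases a) auto
  then have "\<forall>\<^sub>F n in sequentially. p n \<le> exp (- real n * (b - R))"
    using assms exponent_ge_iff by blast
  then show "\<forall>\<^sub>F n in sequentially. exp (- real n * R) * p n \<le> exp (- real n * b)"
  proof eventually_elim
    case (elim n)
    then have "exp (- real n * R) * p n \<le> exp (- real n * R) * exp (- real n * (b - R))"
      by simp
    also have "\<dots> = exp (- real n * b)"
      by (simp flip: exp_add add: algebra_simps)
    finally show ?case .
  qed
qed

lemma eventually_exp_gap:
  assumes "b < b'"
  shows "\<forall>\<^sub>F n in sequentially. c * exp (- real n * b') \<le> exp (- real n * b)"
proof -
  have "\<forall>\<^sub>F n in sequentially. c \<le> exp (real n * (b' - b))"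
    using eventually_ge_at_top[of "nat \<lceil>c / (b' - b)\<rceil>"]
  proof eventually_elim
    case (elim n)
    then have "c / (b' - b) \<le> real n"
      by linarith
    then have "c \<le> real n * (b' - b)"
      using assms by (simp add: pos_divide_le_eq)
    then show ?case
      using exp_ge_add_one_self[of "real n * (b' - b)"] by linarith
  qed
  then show ?thesis
  proof eventually_elim
    case (elim n)
    then have "c * exp (- real n * b') \<le> exp (real n * (b' - b)) * exp (- real n * b')"
      by simp
    then show ?case by (simp flip: exp_add add: algebra_simps)
  qed
qed

lemma exponent_add_ge:
  assumes "\<And>n. 0 \<le> p n" "\<And>n. 0 \<le> q n" "a \<le> exponent p" "a \<le> exponent q"
  shows "a \<le> exponent (\<lambda>n. p n + q n)"
  unfolding exponent_ge_iff[OF add_nonneg_nonneg[OF assms(1,2)]]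
proof (intro allI impI)
  fix b assume "ereal b < a"
  then obtain b' where b': "b < b'" "ereal b' < a" using ereal_dense2 by force
  then have "\<forall>\<^sub>F n in sequentially. p n \<le> exp (- real n * b')"
      "\<forall>\<^sub>F n in sequentially. q n \<le> exp (- real n * b')"
    using assms exponent_ge_iff by blast+
  with eventually_exp_gap[OF b'(1), of 2]
  show "\<forall>\<^sub>F n in sequentially. p n + q n \<le> exp (- real n * b)"
    by eventually_elim linarith
qed

lemma exponent_sum_ge:
  assumes "finite K" "\<And>k n. k \<in> K \<Longrightarrow> 0 \<le> p k n" "\<And>k. k \<in> K \<Longrightarrow> a \<le> exponent (p k)"
  shows "a \<le> exponent (\<lambda>n. \<Sum>k\<in>K. p k n)"
  using assms
proof (induction K rule: finite_induct)
  case empty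
  show ?case by (simp add: exponent_ge_iff)
next
  case (insert k K)
  then show ?case by (simp add: exponent_add_ge sum_nonneg)
qed

lemma gen_RN_deriv_measure_le:
  assumes "finite_measure P" "finite_measure Q" "gen_RN_deriv P Q g"
    and "A \<in> sets Q" "\<And>x. x \<in> A \<Longrightarrow> g x \<le> ennreal c" "0 \<le> c"
  shows "measure P A \<le> c * measure Q A"
proof -
  obtain N where N: "N \<in> sets Q" "\<forall>x\<in>N. g x = \<infinity>"
    and P_eq: "emeasure P A = (\<integral>\<^sup>+x. g x * indicator (A - N) x \<partial>Q) + emeasure P (A \<inter> N)"
    using assms(3,4) unfolding gen_RN_deriv_def by blast
  have "A \<inter> N = {}"
    using N(2) assms(5) by (fastforce simp: top_unique)
  then have "emeasure P A = (\<integral>\<^sup>+x. g x * indicator (A - N) x \<partial>Q)"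
    using P_eq by simp
  also have "\<dots> \<le> (\<integral>\<^sup>+x. ennreal c * indicator A x \<partial>Q)"
    by (intro nn_integral_mono) (auto simp: indicator_def assms(5))
  also have "\<dots> = ennreal c * emeasure Q A"
    using assms(4) by (simp add: nn_integral_cmult_indicator)
  finally have "ennreal (measure P A) \<le> ennreal (c * measure Q A)"
    using assms(1,2,6) by (simp add: finite_measure.emeasure_eq_measure ennreal_mult)
  then show ?thesis
    using assms(6) by (simp add: ennreal_le_iff)
qed

lemma gen_RN_deriv_measure_ge:
  assumes "finite_measure P" "finite_measure Q" "gen_RN_deriv P Q g"
    and "A \<in> sets Q" "\<And>x. x \<in> A \<Longrightarrow> ennreal c \<le> g x" "0 \<le> c"
  shows "c * measure Q A \<le> measure P A"
proof -
  obtain N where N: "N \<in> null_sets Q"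
    and P_eq: "emeasure P A = (\<integral>\<^sup>+x. g x * indicator (A - N) x \<partial>Q) + emeasure P (A \<inter> N)"
    using assms(3,4) unfolding gen_RN_deriv_def by blast
  have "ennreal c * emeasure Q A = ennreal c * emeasure Q (A - N)"
    using N assms(4) by (simp add: emeasure_Diff_null_set)
  also have "\<dots> = (\<integral>\<^sup>+x. ennreal c * indicator (A - N) x \<partial>Q)"
    using assms(4) N by (simp add: nn_integral_cmult_indicator null_setsD2 sets.Diff)
  also have "\<dots> \<le> (\<integral>\<^sup>+x. g x * indicator (A - N) x \<partial>Q)"
    by (intro nn_integral_mono) (auto simp: indicator_def assms(5))
  also have "\<dots> \<le> emeasure P A"
    using P_eq by simp
  finally have "ennreal (c * measure Q A) \<le> ennreal (measure P A)"
    using assms(1,2,6) by (simp add: finite_measure.emeasure_eq_measure ennreal_mult)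
  then show ?thesis
    by (simp add: ennreal_le_iff)
qed

lemma ln_enn_scaled_le_iff:
  assumes "0 < c"
  shows "ereal (1 / c) * ln_enn y \<le> ereal R \<longleftrightarrow> y \<le> ennreal (exp (c * R))"
proof (cases y rule: ennreal_cases)
  case (real t)
  show ?thesis
  proof (cases "t = 0")
    case False
    with real have "0 < t" by simp
    have "ereal (1 / c) * ln_enn y \<le> ereal R \<longleftrightarrow> ln t \<le> c * R"
      using real \<open>0 < t\<close> assms by (simp add: ln_enn_def field_simps)
    also have "\<dots> \<longleftrightarrow> y \<le> ennreal (exp (c * R))"
      using real ln_le_cancel_iff[OF \<open>0 < t\<close> exp_gt_zero, of "c * R"] by (simp add: ennreal_le_iff)
    finally show ?thesis .
  qed (use real assms in \<open>simp add: ln_enn_def\<close>)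
qed (use assms in \<open>simp add: ln_enn_def top_unique\<close>)

locale hypothesis_testing =
  fixes P Q :: "nat \<Rightarrow> 'b measure" and g :: "nat \<Rightarrow> 'b \<Rightarrow> ennreal"
  assumes prob_P: "\<And>n. prob_space (P n)" and prob_Q: "\<And>n. prob_space (Q n)"
    and sets_P: "\<And>n. sets (P n) = sets (Q n)"
    and RN: "\<And>n. gen_RN_deriv (P n) (Q n) (g n)"
begin

lemma finite_P: "finite_measure (P n)" and finite_Q: "finite_measure (Q n)"
  using prob_P prob_Q by (simp_all add: prob_space_def)

lemma space_P: "space (P n) = space (Q n)"
  using sets_P sets_eq_imp_space_eq by blast

definition llr_sublevel :: "nat \<Rightarrow> real \<Rightarrow> 'b set" where
  "llr_sublevel n R = {x \<in> space (P n). ereal (1 / real n) * ln_enn (g n x) \<le> ereal R}"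

lemma eta_eq: "eta P g R = exponent (\<lambda>n. measure (P n) (llr_sublevel n R))"
  unfolding eta_def llr_sublevel_def ..

lemma mem_llr_sublevel_iff:
  "0 < n \<Longrightarrow> x \<in> llr_sublevel n R \<longleftrightarrow> x \<in> space (Q n) \<and> g n x \<le> ennreal (exp (real n * R))"
  by (simp add: llr_sublevel_def space_P ln_enn_scaled_le_iff)

lemma sets_llr_sublevel [measurable]: "llr_sublevel n R \<in> sets (Q n)"
proof (cases "n = 0")
  case True
  \<comment> \<open>Here 1 / real n = 0, and 0 * \<infinity> = 0 in ereal.\<close>
  then have "llr_sublevel n R = (if 0 \<le> R then space (Q n) else {})"
    by (auto simp: llr_sublevel_def space_P zero_ereal_def[symmetric])
  then show ?thesis by simp
next
  case False
  have [measurable]: "g n \<in> borel_measurable (Q n)"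
    using RN unfolding gen_RN_deriv_def by blast
  from False have "llr_sublevel n R = {x \<in> space (Q n). g n x \<le> ennreal (exp (real n * R))}"
    by (auto simp: mem_llr_sublevel_iff)
  then show ?thesis by simp
qed

lemma eta_nonneg: "0 \<le> eta P g R"
  unfolding eta_eq by (intro exponent_nonneg prob_space.prob_le_1[OF prob_P] measure_nonneg)

lemma measure_P_llr_sublevel_le:
  assumes "0 < n" "A \<in> sets (Q n)"
  shows "measure (P n) (llr_sublevel n R \<inter> A) \<le> exp (real n * R) * measure (Q n) A"
proof -
  have "measure (P n) (llr_sublevel n R \<inter> A) \<le> exp (real n * R) * measure (Q n) (llr_sublevel n R \<inter> A)"
    using assms by (intro gen_RN_deriv_measure_le[OF finite_P finite_Q RN]) (auto simp: mem_llr_sublevel_iff)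
  also have "\<dots> \<le> exp (real n * R) * measure (Q n) A"
    using assms by (intro mult_left_mono finite_measure.finite_measure_mono[OF finite_Q]) auto
  finally show ?thesis .
qed

lemma measure_Q_outside_llr_sublevel_le:
  assumes "0 < n" "A \<in> sets (Q n)" "A \<inter> llr_sublevel n R = {}"
  shows "measure (Q n) A \<le> exp (- real n * R) * measure (P n) A"
proof -
  have "ennreal (exp (real n * R)) \<le> g n x" if "x \<in> A" for x
  proof -
    have "x \<notin> llr_sublevel n R"
      using that assms(3) by blast
    then have "\<not> g n x \<le> ennreal (exp (real n * R))"
      using that sets.sets_into_space[OF assms(2)] by (auto simp: mem_llr_sublevel_iff[OF assms(1)])
    then show ?thesis
      by (simp add: not_le order.strict_implies_order)
  qed
  then have "exp (real n * R) * measure (Q n) A \<le> measure (P n) A"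
    using assms(2) by (intro gen_RN_deriv_measure_ge[OF finite_P finite_Q RN]) auto
  then show ?thesis
    by (simp add: exp_minus field_simps)
qed

lemma measure_Q_outside_llr_sublevel_telescope:
  assumes "0 < n"
  shows "measure (Q n) (space (Q n) - llr_sublevel n (c 0)) \<le>
    (\<Sum>k<K. exp (- real n * c k) * measure (P n) (llr_sublevel n (c (Suc k)))) + exp (- real n * c K)"
proof -
  let ?S = "\<lambda>k. llr_sublevel n (c k)"
  have decompose: "measure (Q n) (space (Q n) - ?S 0) \<le>
      (\<Sum>k<K. measure (Q n) (?S (Suc k) - ?S k)) + measure (Q n) (space (Q n) - ?S K)"
  proof (induction K)
    case (Suc K)
    have "space (Q n) - ?S K \<subseteq> (?S (Suc K) - ?S K) \<union> (space (Q n) - ?S (Suc K))"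
      by blast
    then have "measure (Q n) (space (Q n) - ?S K) \<le>
        measure (Q n) (?S (Suc K) - ?S K) + measure (Q n) (space (Q n) - ?S (Suc K))"
      by (intro order_trans[OF finite_measure.finite_measure_mono[OF finite_Q] measure_Un_le]) auto
    with Suc show ?case by simp
  qed simp
  have slice: "measure (Q n) (?S (Suc k) - ?S k) \<le> exp (- real n * c k) * measure (P n) (?S (Suc k))" for k
  proof -
    have "measure (Q n) (?S (Suc k) - ?S k) \<le> exp (- real n * c k) * measure (P n) (?S (Suc k) - ?S k)"
      using assms by (intro measure_Q_outside_llr_sublevel_le) auto
    also have "\<dots> \<le> exp (- real n * c k) * measure (P n) (?S (Suc k))"
      by (intro mult_left_mono finite_measure.finite_measure_mono[OF finite_P]) (auto simp: sets_P)
    finally show ?thesis .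
  qed
  have tail: "measure (Q n) (space (Q n) - ?S K) \<le> exp (- real n * c K)"
  proof -
    have "measure (Q n) (space (Q n) - ?S K) \<le> exp (- real n * c K) * measure (P n) (space (Q n) - ?S K)"
      using assms by (intro measure_Q_outside_llr_sublevel_le) auto
    also have "\<dots> \<le> exp (- real n * c K)"
      using prob_space.prob_le_1[OF prob_P] by (intro mult_left_le) auto
    finally show ?thesis .
  qed
  note decompose
  also have "(\<Sum>k<K. measure (Q n) (?S (Suc k) - ?S k)) + measure (Q n) (space (Q n) - ?S K) \<le>
      (\<Sum>k<K. exp (- real n * c k) * measure (P n) (?S (Suc k))) + exp (- real n * c K)"
    by (intro add_mono sum_mono slice tail)
  finally show ?thesis .
qed

lemma exponent_outside_llr_sublevel_ge:
  assumes "\<And>k. k < K \<Longrightarrow> a \<le> ereal (c k) + eta P g (c (Suc k))" and "a \<le> ereal (c K)"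
  shows "a \<le> exponent (\<lambda>n. measure (Q n) (space (Q n) - llr_sublevel n (c 0)))"
proof -
  have "a \<le> exponent (\<lambda>n. \<Sum>k<K. exp (- real n * c k) * measure (P n) (llr_sublevel n (c (Suc k))))"
    using assms(1) by (intro exponent_sum_ge order_trans[OF _ exponent_mult_exp_ge]) (auto simp: eta_eq)
  moreover have "a \<le> exponent (\<lambda>n. exp (- real n * c K) * 1)"
    using assms(2) by (intro order_trans[OF _ exponent_mult_exp_ge[of "\<lambda>_. 1" 0]]) (simp_all add: exponent_nonneg)
  ultimately have "a \<le> exponent (\<lambda>n.
      (\<Sum>k<K. exp (- real n * c k) * measure (P n) (llr_sublevel n (c (Suc k)))) + exp (- real n * c K))"
    by (simp add: exponent_add_ge sum_nonneg)
  also have "\<dots> \<le> exponent (\<lambda>n. measure (Q n) (space (Q n) - llr_sublevel n (c 0)))"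
  proof (rule exponent_mono)
    show "\<forall>\<^sub>F n in sequentially. measure (Q n) (space (Q n) - llr_sublevel n (c 0)) \<le>
        (\<Sum>k<K. exp (- real n * c k) * measure (P n) (llr_sublevel n (c (Suc k)))) + exp (- real n * c K)"
      using eventually_gt_at_top[of 0] by eventually_elim (rule measure_Q_outside_llr_sublevel_telescope)
  qed simp
  finally show ?thesis .
qed

lemma r_achievable_le_eta:
  assumes "r_achievable P Q r E" "eta P g R < ereal r"
  shows "ereal E \<le> ereal R + eta P g R"
proof -
  obtain Acc where Acc: "\<And>n. Acc n \<in> sets (Q n)"
      and type_I: "ereal r \<le> exponent (\<lambda>n. measure (P n) (space (P n) - Acc n))"
      and type_II: "ereal E \<le> exponent (\<lambda>n. measure (Q n) (Acc n))"
    using assms(1) unfolding r_achievable_def by blast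
  let ?a = "min (ereal (E - R)) (ereal r)"
  have "\<forall>\<^sub>F n in sequentially. measure (P n) (llr_sublevel n R) \<le>
      exp (real n * R) * measure (Q n) (Acc n) + measure (P n) (space (P n) - Acc n)"
    using eventually_gt_at_top[of 0]
  proof eventually_elim
    case (elim n)
    have "measure (P n) (llr_sublevel n R) \<le>
        measure (P n) (llr_sublevel n R \<inter> Acc n) + measure (P n) (space (P n) - Acc n)"
      using Acc sets.sets_into_space[OF sets_llr_sublevel, of n R]
      by (intro order_trans[OF finite_measure.finite_measure_mono[OF finite_P] measure_Un_le])
        (auto simp: sets_P space_P)
    also have "\<dots> \<le> exp (real n * R) * measure (Q n) (Acc n) + measure (P n) (space (P n) - Acc n)"
      using elim Acc by (intro add_right_mono measure_P_llr_sublevel_le)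
    finally show ?case .
  qed
  moreover have "?a \<le> exponent (\<lambda>n. exp (real n * R) * measure (Q n) (Acc n) +
      measure (P n) (space (P n) - Acc n))"
  proof (intro exponent_add_ge)
    have "?a \<le> ereal (- R) + ereal E" by (simp add: min.coboundedI1)
    also have "\<dots> \<le> exponent (\<lambda>n. exp (real n * R) * measure (Q n) (Acc n))"
      using exponent_mult_exp_ge[OF measure_nonneg type_II, of "- R"] by simp
    finally show "?a \<le> \<dots>" .
    show "?a \<le> exponent (\<lambda>n. measure (P n) (space (P n) - Acc n))"
      using type_I by (rule min.coboundedI2)
  qed simp_all
  ultimately have "?a \<le> eta P g R"
    unfolding eta_eq by (blast intro: order_trans exponent_mono measure_nonneg)
  with assms(2) eta_nonneg[of R] show ?thesis
    by (cases "eta P g R") (auto simp: min_def split: if_splits)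
qed

lemma r_le_eta_below_Inf:
  assumes "ereal E < Inf {ereal R + eta P g R | R. eta P g R < ereal r}" (is "_ < ?I")
  shows "ereal r \<le> eta P g (E - r)"
proof (rule ccontr)
  assume "\<not> ereal r \<le> eta P g (E - r)"
  then have "?I \<le> ereal (E - r) + eta P g (E - r)"
    by (intro Inf_lower) (auto simp: not_le)
  also have "\<dots> < ereal E"
    using \<open>\<not> ereal r \<le> eta P g (E - r)\<close> eta_nonneg[of "E - r"] by (cases "eta P g (E - r)") auto
  finally show False
    using assms by simp
qed

lemma r_achievable_below_Inf:
  assumes "ereal E < Inf {ereal R + eta P g R | R. eta P g R < ereal r}" (is "_ < ?I")
  shows "r_achievable P Q r E"
proof -
  define R0 where "R0 = E - r"
  have type_I: "ereal r \<le> eta P g R0"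
    unfolding R0_def using assms by (rule r_le_eta_below_Inf)
  obtain \<delta> where \<delta>: "0 < \<delta>" "ereal (E + \<delta>) \<le> ?I"
    using assms by (cases ?I) (auto intro: that[of "real_of_ereal ?I - E"] that[of 1])
  define c where "c k = R0 + real k * \<delta>" for k
  define K where "K = nat \<lceil>r / \<delta>\<rceil>"
  have layer: "ereal E \<le> ereal (c k) + eta P g (c (Suc k))" for k
  proof (cases "eta P g (c (Suc k)) < ereal r")
    case True
    then have "ereal (E + \<delta>) \<le> ereal (c (Suc k)) + eta P g (c (Suc k))"
      using \<delta>(2) by (blast intro: order_trans Inf_lower)
    then show ?thesis
      using eta_nonneg[of "c (Suc k)"] by (cases "eta P g (c (Suc k))") (auto simp: c_def algebra_simps)
  next
    case False
    have "ereal E \<le> ereal (c k) + ereal r"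
      using \<delta>(1) by (simp add: c_def R0_def)
    also have "\<dots> \<le> ereal (c k) + eta P g (c (Suc k))"
      using False by (intro add_left_mono) (simp add: not_less)
    finally show ?thesis .
  qed
  have top_layer: "ereal E \<le> ereal (c K)"
  proof -
    have "r \<le> real K * \<delta>"
      using real_nat_ceiling_ge[of "r / \<delta>"] \<delta>(1) by (simp add: K_def pos_divide_le_eq)
    then show ?thesis
      by (simp add: c_def R0_def)
  qed
  define Acc where "Acc n = space (Q n) - llr_sublevel n R0" for n
  have "c 0 = R0"
    by (simp add: c_def)
  then have type_II: "ereal E \<le> exponent (\<lambda>n. measure (Q n) (Acc n))"
    using exponent_outside_llr_sublevel_ge[of K "ereal E" c, OF layer top_layer] by (simp add: Acc_def)
  have "space (P n) - Acc n = llr_sublevel n R0" for n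
    using sets.sets_into_space[OF sets_llr_sublevel] by (auto simp: Acc_def space_P)
  with type_I have "ereal r \<le> exponent (\<lambda>n. measure (P n) (space (P n) - Acc n))"
    by (simp add: eta_eq)
  moreover have "Acc n \<in> sets (Q n)" for n
    unfolding Acc_def by (intro sets.Diff sets.top sets_llr_sublevel)
  ultimately show ?thesis
    using type_II unfolding r_achievable_def by blast
qed

lemma B_e_eq_Inf: "B_e P Q r = Inf {ereal R + eta P g R | R. eta P g R < ereal r}" (is "_ = ?I")
  unfolding B_e_def
proof (rule antisym)
  show "Sup {ereal E | E. r_achievable P Q r E} \<le> ?I"
    by (auto intro!: Sup_least Inf_greatest r_achievable_le_eta)
  show "?I \<le> Sup {ereal E | E. r_achievable P Q r E}"
    unfolding le_Sup_iff by (metis (mono_tags, lifting) ereal_dense2 mem_Collect_eq r_achievable_below_Inf)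
qed

end

theorem theorem2p1:
  fixes A :: "'a measure"
    and P Q :: "nat \<Rightarrow> (nat \<Rightarrow> 'a) measure"
    and g :: "nat \<Rightarrow> (nat \<Rightarrow> 'a) \<Rightarrow> ennreal"
    and r :: real
  assumes "\<And>n. prob_space (P n)" and "\<And>n. prob_space (Q n)"
    and "\<And>n. sets (P n) = sets (PiM {..<n} (\<lambda>_. A))"
    and "\<And>n. sets (Q n) = sets (PiM {..<n} (\<lambda>_. A))"
    and "\<And>n. gen_RN_deriv (P n) (Q n) (g n)"
    and "r \<ge> 0"
  shows "B_e P Q r = Inf {ereal R + eta P g R | R. eta P g R < ereal r} \<and> B_e P Q 0 = \<infinity>"
proof -
  interpret hypothesis_testing P Q g
    using assms(1-5) by (intro hypothesis_testing.intro) simp_all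
  have "{ereal R + eta P g R | R. eta P g R < ereal 0} = {}"
    using eta_nonneg by (auto simp: not_less simp flip: zero_ereal_def)
  then show ?thesis
    using B_e_eq_Inf[of r] B_e_eq_Inf[of 0] by (simp add: top_ereal_def)
qed

end
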